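(* Let $(p_m)$ and $(q_n)$ belong to $SVA_{reg(\alpha)}$ (for some $\alpha\ge0$), and let $(u_{mn})$ be a double sequence of real numbers that is $(\overline{N},p,q)$ summable to a number $\ell$. If $$\frac{P_m}{p_m}\Delta_{10}u_{mn}=O_L(1)\quad\text{and}\quad\frac{Q_n}{q_n}\Delta_{01}u_{mn}=O_L(1),$$ then $(u_{mn})$ is $P$-convergent to $\ell$.
   Context: Weights: $(p_m)_{m\ge0},(q_n)_{n\ge0}$ are sequences of positive reals with $P_m=\sum_{i=0}^m p_i\to\infty$ and $Q_n=\sum_{j=0}^n q_j\to\infty$. $SVA_{reg(\alpha)}$ denotes the set of positive sequences $(p_m)$ whose partial sums have the form $P_m=(m+1)^{\alpha}L(m)$ ($m\ge0$) with a constant $\alpha\ge0$ and a slowly varying function $L$ on $(0,\infty)$, i.e. $L$ positive, measurable, and $L(\lambda t)/L(t)\to1$ as $t\to\infty$ for every $\lambda>0$. The weighted means are $\sigma_{mn}=\frac{1}{P_mQ_n}\sum_{i=0}^m\sum_{j=0}^n p_iq_ju_{ij}$; $(u_{mn})$ is $(\overline{N},p,q)$ summable to $\ell$ if $(\sigma_{mn})$ is $P$-convergent to $\ell$. A double sequence $(a_{mn})$ is $P$-convergent to $\ell$ if for every $\epsilon>0$ there is $n_0$ with $|a_{mn}-\ell|<\epsilon$ whenever $m,n\ge n_0$. $\Delta_{10}u_{mn}=u_{mn}-u_{m-1,n}$ and $\Delta_{01}u_{mn}=u_{mn}-u_{m,n-1}$. For a real double array, $a_{mn}=O_L(1)$ means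 there exist constants $M>0$ and $n_0$ such that $a_{mn}\ge -M$ for all $m,n\ge n_0$. *)

theory Defs
  imports "HOL-Analysis.Analysis"
begin

definition psum :: "(nat \<Rightarrow> real) \<Rightarrow> nat \<Rightarrow> real" where
  "psum p m = (\<Sum>i\<le>m. p i)"

definition slowly_varying :: "(real \<Rightarrow> real) \<Rightarrow> bool" where
  "slowly_varying L \<longleftrightarrow>
     (\<forall>t>0. L t > 0) \<and>
     L \<in> borel_measurable (restrict_space borel {0<..}) \<and>
     (\<forall>c>0. ((\<lambda>t. L (c * t) / L t) \<longlongrightarrow> 1) at_top)"

definition SVA_reg :: "real \<Rightarrow> (nat \<Rightarrow> real) set" where
  "SVA_reg \<alpha> = {p. (\<forall>m. p m > 0) \<and>
     (\<exists>L. slowly_varying L \<and> (\<forall>m. psum p m = (real m + 1) powr \<alpha> * L (real m)))}"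

definition wmean :: "(nat \<Rightarrow> real) \<Rightarrow> (nat \<Rightarrow> real) \<Rightarrow> (nat \<Rightarrow> nat \<Rightarrow> real) \<Rightarrow> nat \<Rightarrow> nat \<Rightarrow> real" where
  "wmean p q u m n = (1 / (psum p m * psum q n)) * (\<Sum>i\<le>m. \<Sum>j\<le>n. p i * q j * u i j)"

definition P_convergent_to :: "(nat \<Rightarrow> nat \<Rightarrow> real) \<Rightarrow> real \<Rightarrow> bool" where
  "P_convergent_to a l \<longleftrightarrow> (\<forall>\<epsilon>>0. \<exists>n0. \<forall>m n. m \<ge> n0 \<and> n \<ge> n0 \<longrightarrow> \<bar>a m n - l\<bar> < \<epsilon>)"

definition NPQ_summable_to :: "(nat \<Rightarrow> real) \<Rightarrow> (nat \<Rightarrow> real) \<Rightarrow> (nat \<Rightarrow> nat \<Rightarrow> real) \<Rightarrow> real \<Rightarrow> bool" where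
  "NPQ_summable_to p q u l \<longleftrightarrow> P_convergent_to (wmean p q u) l"

definition O_L :: "(nat \<Rightarrow> nat \<Rightarrow> real) \<Rightarrow> bool" where
  "O_L a \<longleftrightarrow> (\<exists>M>0. \<exists>n0. \<forall>m n. m \<ge> n0 \<and> n \<ge> n0 \<longrightarrow> a m n \<ge> - M)"

text \<open>Backward differences; the value at index 0 uses u_{-1,n} = 0 (irrelevant for O_L).\<close>
definition Delta10 :: "(nat \<Rightarrow> nat \<Rightarrow> real) \<Rightarrow> nat \<Rightarrow> nat \<Rightarrow> real" where
  "Delta10 u m n = u m n - (if m = 0 then 0 else u (m - 1) n)"

definition Delta01 :: "(nat \<Rightarrow> nat \<Rightarrow> real) \<Rightarrow> nat \<Rightarrow> nat \<Rightarrow> real" where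
  "Delta01 u m n = u m n - (if n = 0 then 0 else u m (n - 1))"

end

theory Submission
  imports Defs "HOL-Real_Asymp.Real_Asymp"
begin

text \<open>The one-sided conditions say that \<open>u\<close> can drop by at most \<open>C p\<^sub>m / P\<^sub>m\<close> per step in
  each direction, so across an index window \<open>(m, b]\<close> with \<open>P\<^sub>b \<le> (1 + \<delta>) P\<^sub>m\<close> it drops by
  at most \<open>C \<delta>\<close>. For weights in \<open>SVA_reg \<alpha>\<close> one has \<open>P\<^sub>m\<^sub>+\<^sub>1 / P\<^sub>m \<longlonglongrightarrow> 1\<close>, so windows with
  \<open>P\<^sub>b / P\<^sub>m \<in> [1 + \<delta>/2, 1 + \<delta>]\<close> exist above and below every large index. The weighted
  average of \<open>u\<close> over a rectangle of such windows is an inclusion-exclusion combination of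
  four means \<open>\<sigma>\<close>, hence within \<open>36 e / \<delta>\<^sup>2\<close> of \<open>l\<close> once these are within \<open>e\<close> of \<open>l\<close>.
  Comparing \<open>u\<^sub>m\<^sub>n\<close> with the averages over the rectangles above and below \<open>(m, n)\<close> gives
  \<open>\<bar>u\<^sub>m\<^sub>n - l\<bar> \<le> C \<delta> + 36 e / \<delta>\<^sup>2\<close>, which is small for a suitable choice of \<open>\<delta>\<close> and \<open>e\<close>.\<close>

lemma psum_Suc: "psum w (Suc k) = psum w k + w (Suc k)"
  unfolding psum_def by simp

lemma psum_pos: "(\<And>k. w k > 0) \<Longrightarrow> psum w m > 0"
  unfolding psum_def by (intro sum_pos) auto

lemma psum_mono: "(\<And>k. w k > 0) \<Longrightarrow> i \<le> j \<Longrightarrow> psum w i \<le> psum w j"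
  unfolding psum_def by (intro sum_mono2) (auto simp: less_imp_le)

lemma sum_greaterThanAtMost_eq_diff:
  fixes f :: "nat \<Rightarrow> 'a::ab_group_add"
  assumes "a \<le> b"
  shows "(\<Sum>i\<in>{a<..b}. f i) = (\<Sum>i\<le>b. f i) - (\<Sum>i\<le>a. f i)"
proof -
  have "{a<..b} = {..b} - {..a}" by auto
  then show ?thesis using assms by (simp add: sum_diff)
qed

lemma exists_crossing_index:
  fixes f :: "nat \<Rightarrow> 'a::linorder"
  assumes "f K < T" and "eventually (\<lambda>k. T \<le> f k) sequentially"
  shows "\<exists>a\<ge>K. f a < T \<and> T \<le> f (Suc a)"
proof (rule ccontr)
  assume no_crossing: "\<not> ?thesis"
  have below: "f k < T" if "K \<le> k" for k
    using that
  proof (induction k rule: dec_induct)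
    case base
    show ?case using assms(1) .
  next
    case (step k)
    then show ?case using no_crossing by (meson not_le)
  qed
  obtain N where "\<And>k. N \<le> k \<Longrightarrow> T \<le> f k"
    using assms(2) by (auto simp: eventually_sequentially)
  then show False using below[of "max N K"] by (meson max.cobounded1 max.cobounded2 not_le)
qed

lemma slowly_varying_quotient_tendsto:
  assumes L: "slowly_varying L" and "a > 0" "b > 0"
  shows "((\<lambda>t. L (a * t) / L (b * t)) \<longlongrightarrow> 1) at_top"
proof -
  have L_pos: "\<And>t. t > 0 \<Longrightarrow> L t > 0"
    and L_lim: "\<And>c. c > 0 \<Longrightarrow> ((\<lambda>t. L (c * t) / L t) \<longlongrightarrow> 1) at_top"
    using L unfolding slowly_varying_def by auto
  have L_nz: "L t \<noteq> 0" if "t > 0" for t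
    using L_pos[OF that] by simp
  have "((\<lambda>t. (L (a * t) / L t) / (L (b * t) / L t)) \<longlongrightarrow> 1 / 1) at_top"
    using assms by (intro tendsto_divide L_lim) auto
  then have "((\<lambda>t. (L (a * t) / L t) / (L (b * t) / L t)) \<longlongrightarrow> 1) at_top"
    by (simp only: div_by_1)
  moreover have "eventually (\<lambda>t. (L (a * t) / L t) / (L (b * t) / L t) = L (a * t) / L (b * t)) at_top"
    using eventually_gt_at_top[of 0] by eventually_elim (simp add: L_nz)
  ultimately show ?thesis by (rule Lim_transform_eventually)
qed

lemma SVA_reg_psum_multiple_ratio:
  fixes b :: nat
  assumes "p \<in> SVA_reg \<alpha>" and "b > 0"
  shows "((\<lambda>k. psum p ((b + 1) * k) / psum p (b * k)) \<longlongrightarrow> ((real b + 1) / real b) powr \<alpha>) sequentially"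
proof -
  obtain L where L: "slowly_varying L" and P: "\<And>m. psum p m = (real m + 1) powr \<alpha> * L (real m)"
    using assms(1) unfolding SVA_reg_def by blast
  have base: "((\<lambda>k. (real k * (real b + 1) + 1) / (real k * real b + 1)) \<longlongrightarrow> (real b + 1) / real b) sequentially"
    using assms(2) by real_asymp (simp add: divide_inverse)
  have slow: "((\<lambda>k. L ((real b + 1) * real k) / L (real b * real k)) \<longlongrightarrow> 1) sequentially"
    using slowly_varying_quotient_tendsto[OF L, of "real b + 1" "real b"] assms(2)
    by (auto intro: filterlim_compose filterlim_real_sequentially)
  have "((\<lambda>k. ((real k * (real b + 1) + 1) / (real k * real b + 1)) powr \<alpha>
              * (L ((real b + 1) * real k) / L (real b * real k)))
          \<longlongrightarrow> ((real b + 1) / real b) powr \<alpha> * 1) sequentially"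
    using assms(2) by (intro tendsto_mult tendsto_powr base slow tendsto_const) auto
  moreover have "psum p ((b + 1) * k) / psum p (b * k)
      = ((real k * (real b + 1) + 1) / (real k * real b + 1)) powr \<alpha>
        * (L ((real b + 1) * real k) / L (real b * real k))" for k
    by (simp add: P powr_divide algebra_simps)
  ultimately show ?thesis by simp
qed

text \<open>Since \<open>psum w\<close> increases, \<open>psum w (Suc m) / psum w m\<close> is dominated by
  \<open>psum w ((b + 1) * k) / psum w (b * k)\<close> for \<open>k = m div b\<close>. So only ratios at fixed
  multiples are needed, which slow variation controls directly, without the uniform
  convergence theorem.\<close>

lemma eventually_psum_Suc_ratio_less:
  fixes w :: "nat \<Rightarrow> real" and b :: nat
  assumes w: "\<And>k. w k > 0" and "b > 0"
    and "eventually (\<lambda>k. psum w ((b + 1) * k) / psum w (b * k) < r) sequentially"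
  shows "eventually (\<lambda>m. psum w (Suc m) / psum w m < r) sequentially"
proof -
  have "eventually (\<lambda>k. b \<le> k \<and> psum w ((b + 1) * k) / psum w (b * k) < r) sequentially"
    using assms(3) by (intro eventually_conj eventually_ge_at_top)
  then obtain K where K: "\<And>k. K \<le> k \<Longrightarrow> b \<le> k \<and> psum w ((b + 1) * k) / psum w (b * k) < r"
    by (auto simp: eventually_sequentially)
  show ?thesis
  proof (rule eventually_sequentiallyI[of "b * K"])
    fix m
    assume "b * K \<le> m"
    define k where "k = m div b"
    have "K \<le> k"
      using \<open>b * K \<le> m\<close> \<open>b > 0\<close> unfolding k_def by (metis div_le_mono nonzero_mult_div_cancel_left not_gr0)
    have "b * k \<le> m" and "m < b * k + b"
      using \<open>b > 0\<close> unfolding k_def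
      by (simp_all add: mult.commute[of b])
         (metis div_mult_mod_eq mod_less_divisor nat_add_left_cancel_less)
    then have "Suc m \<le> (b + 1) * k"
      using K[OF \<open>K \<le> k\<close>] by (simp add: algebra_simps)
    have "psum w (Suc m) / psum w m \<le> psum w ((b + 1) * k) / psum w (b * k)"
      using \<open>b * k \<le> m\<close> \<open>Suc m \<le> (b + 1) * k\<close>
      by (intro frac_le psum_mono psum_pos less_imp_le[OF psum_pos] w) auto
    also have "\<dots> < r"
      using K[OF \<open>K \<le> k\<close>] by simp
    finally show "psum w (Suc m) / psum w m < r" .
  qed
qed

lemma SVA_reg_psum_Suc_ratio:
  assumes "p \<in> SVA_reg \<alpha>"
  shows "((\<lambda>k. psum p (Suc k) / psum p k) \<longlongrightarrow> 1) sequentially"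
proof (rule order_tendstoI)
  have p_pos: "\<And>k. p k > 0"
    using assms unfolding SVA_reg_def by blast
  have ratio_ge_1: "1 \<le> psum p (Suc k) / psum p k" for k
    using psum_pos[of p k, OF p_pos] psum_mono[of p k "Suc k", OF p_pos] by simp
  show "eventually (\<lambda>k. a < psum p (Suc k) / psum p k) sequentially" if "a < 1" for a
    using ratio_ge_1 that by (intro always_eventually allI) (rule less_le_trans)
  fix r :: real
  assume "r > 1"
  have "((\<lambda>b. ((real b + 1) / real b) powr \<alpha>) \<longlongrightarrow> 1) sequentially"
    by real_asymp
  then have "eventually (\<lambda>b. 0 < b \<and> ((real b + 1) / real b) powr \<alpha> < r) sequentially"
    using \<open>r > 1\<close> eventually_gt_at_top[of 0] by (auto dest: order_tendstoD(2) intro: eventually_conj)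
  then obtain b :: nat where "b > 0" and "((real b + 1) / real b) powr \<alpha> < r"
    unfolding eventually_sequentially by blast
  then show "eventually (\<lambda>m. psum p (Suc m) / psum p m < r) sequentially"
    using SVA_reg_psum_multiple_ratio[OF assms \<open>b > 0\<close>]
    by (intro eventually_psum_Suc_ratio_less[OF p_pos \<open>b > 0\<close>] order_tendstoD(2))
qed

definition ratio_window :: "(nat \<Rightarrow> real) \<Rightarrow> real \<Rightarrow> nat \<Rightarrow> nat \<Rightarrow> bool" where
  "ratio_window w \<delta> a b \<longleftrightarrow> a < b \<and> (1 + \<delta>/2) * psum w a \<le> psum w b \<and> psum w b \<le> (1 + \<delta>) * psum w a"

context
  fixes w :: "nat \<Rightarrow> real"
  assumes w_pos: "\<And>k. w k > 0"
    and psum_unbounded: "filterlim (psum w) at_top sequentially"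
    and psum_Suc_ratio: "((\<lambda>k. psum w (Suc k) / psum w k) \<longlongrightarrow> 1) sequentially"
begin

lemma eventually_psum_Suc_le:
  assumes "r > 1"
  shows "eventually (\<lambda>k. psum w (Suc k) \<le> r * psum w k) sequentially"
  using order_tendstoD(2)[OF psum_Suc_ratio assms]
  by eventually_elim (simp add: pos_divide_less_eq psum_pos[of w, OF w_pos] less_imp_le)

lemma eventually_psum_ge: "eventually (\<lambda>k. T \<le> psum w k) sequentially"
  using psum_unbounded by (simp add: filterlim_at_top)

lemma eventually_psum_window_above:
  assumes "\<delta> > 0"
  shows "eventually (\<lambda>m. \<exists>b. ratio_window w \<delta> m b) sequentially"
proof -
  define r where "r = (1 + \<delta>) / (1 + \<delta>/2)"
  have "r > 1" and r: "r * (1 + \<delta>/2) = 1 + \<delta>"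
    using \<open>\<delta> > 0\<close> unfolding r_def by (simp_all add: field_simps)
  obtain K where step: "\<And>k. K \<le> k \<Longrightarrow> psum w (Suc k) \<le> r * psum w k"
    using eventually_psum_Suc_le[OF \<open>r > 1\<close>] by (auto simp: eventually_sequentially)
  show ?thesis
  proof (rule eventually_sequentiallyI[of K])
    fix m
    assume "K \<le> m"
    have "psum w m < (1 + \<delta>/2) * psum w m"
      using psum_pos[of w m, OF w_pos] \<open>\<delta> > 0\<close> by simp
    then obtain a where "m \<le> a" and a: "psum w a < (1 + \<delta>/2) * psum w m"
      and Suc_a: "(1 + \<delta>/2) * psum w m \<le> psum w (Suc a)"
      using exists_crossing_index[OF _ eventually_psum_ge] by blast
    have "psum w (Suc a) \<le> r * psum w a"
      using step \<open>K \<le> m\<close> \<open>m \<le> a\<close> by simp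
    also have "\<dots> \<le> r * ((1 + \<delta>/2) * psum w m)"
      using a \<open>r > 1\<close> by (intro mult_left_mono) auto
    also have "\<dots> = (1 + \<delta>) * psum w m"
      by (simp only: mult.assoc[symmetric] r)
    finally show "\<exists>b. ratio_window w \<delta> m b"
      using Suc_a \<open>m \<le> a\<close> unfolding ratio_window_def by (intro exI[of _ "Suc a"]) auto
  qed
qed

lemma eventually_psum_window_below:
  assumes "\<delta> > 0"
  shows "eventually (\<lambda>m. \<exists>a. N \<le> a \<and> ratio_window w \<delta> a m) sequentially"
proof -
  define r where "r = (1 + \<delta>) / (1 + \<delta>/2)"
  have "r > 1" and r: "(1 + \<delta>/2) * r = 1 + \<delta>"
    using \<open>\<delta> > 0\<close> unfolding r_def by (simp_all add: field_simps)
  have "eventually (\<lambda>k. N \<le> k \<and> psum w (Suc k) \<le> r * psum w k) sequentially"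
    using eventually_psum_Suc_le[OF \<open>r > 1\<close>] by (intro eventually_conj eventually_ge_at_top)
  then obtain K where step: "\<And>k. K \<le> k \<Longrightarrow> N \<le> k \<and> psum w (Suc k) \<le> r * psum w k"
    by (auto simp: eventually_sequentially)
  have "eventually (\<lambda>m. (1 + \<delta>/2) * psum w K < psum w m) sequentially"
    using psum_unbounded by (simp add: filterlim_at_top_dense)
  then show ?thesis
  proof eventually_elim
    case (elim m)
    define T where "T = psum w m / (1 + \<delta>/2)"
    have "psum w K < T"
      using elim \<open>\<delta> > 0\<close> unfolding T_def by (simp add: field_simps)
    then obtain a where "K \<le> a" and a: "psum w a < T" and Suc_a: "T \<le> psum w (Suc a)"
      using exists_crossing_index[OF _ eventually_psum_ge] by blast
    have "T \<le> psum w m"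
      using psum_pos[of w m, OF w_pos] \<open>\<delta> > 0\<close> unfolding T_def by (simp add: field_simps)
    then have "a < m"
      using a psum_mono[of w m a, OF w_pos] by (meson leI less_le_trans not_less)
    have "psum w m = (1 + \<delta>/2) * T"
      using \<open>\<delta> > 0\<close> unfolding T_def by simp
    also have "\<dots> \<le> (1 + \<delta>/2) * (r * psum w a)"
      using Suc_a step[of a] \<open>K \<le> a\<close> \<open>\<delta> > 0\<close> by simp
    finally have "psum w m \<le> (1 + \<delta>) * psum w a"
      using r by (simp add: mult.assoc[symmetric])
    moreover have "(1 + \<delta>/2) * psum w a \<le> psum w m"
      using a \<open>\<delta> > 0\<close> unfolding T_def by (simp add: field_simps)
    ultimately show ?case
      using step[of a] \<open>K \<le> a\<close> \<open>a < m\<close> unfolding ratio_window_def by auto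
  qed
qed

end

lemma telescope_lower_bound:
  fixes f w :: "nat \<Rightarrow> real"
  assumes w: "\<And>k. w k > 0" and "C \<ge> 0"
    and increment: "\<And>k. a < k \<Longrightarrow> k \<le> i \<Longrightarrow> f k - f (k - 1) \<ge> - C * w k / psum w k"
    and "a \<le> i" and "psum w i \<le> (1 + \<delta>) * psum w a"
  shows "f i \<ge> f a - C * \<delta>"
proof -
  have P_a: "psum w a > 0"
    using psum_pos[of w, OF w] .
  have "f i \<ge> f a - C * (psum w i - psum w a) / psum w a"
    using \<open>a \<le> i\<close> increment
  proof (induction i rule: dec_induct)
    case base
    show ?case by simp
  next
    case (step k)
    have "f (Suc k) - f k \<ge> - C * w (Suc k) / psum w (Suc k)"
      using step.prems[of "Suc k"] step.hyps by simp
    moreover have "C * w (Suc k) / psum w (Suc k) \<le> C * w (Suc k) / psum w a"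
      using P_a psum_mono[of w a "Suc k", OF w] \<open>C \<ge> 0\<close> w[of "Suc k"] step.hyps
      by (intro divide_left_mono) auto
    moreover have "C * (psum w (Suc k) - psum w a) / psum w a
        = C * (psum w k - psum w a) / psum w a + C * w (Suc k) / psum w a"
      by (simp add: psum_Suc add_divide_distrib[symmetric] algebra_simps)
    ultimately show ?case
      using step.IH step.prems by auto
  qed
  moreover have "C * ((psum w i - psum w a) / psum w a) \<le> C * \<delta>"
    using assms(5) P_a \<open>C \<ge> 0\<close> by (intro mult_left_mono) (simp_all add: divide_le_eq algebra_simps)
  ultimately show ?thesis by simp
qed

lemma O_L_transpose: "O_L a \<Longrightarrow> O_L (\<lambda>m n. a n m)"
  unfolding O_L_def by blast

lemma Delta01_conv_Delta10: "Delta01 u m n = Delta10 (\<lambda>i j. u j i) n m"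
  by (simp add: Delta01_def Delta10_def)

lemma O_L_Delta10_imp_increment_bound:
  fixes w :: "nat \<Rightarrow> real" and u :: "nat \<Rightarrow> nat \<Rightarrow> real"
  assumes w: "\<And>k. w k > 0" and "O_L (\<lambda>m n. psum w m / w m * Delta10 u m n)"
  obtains C N where "C > 0"
    and "\<And>i j. N < i \<Longrightarrow> N \<le> j \<Longrightarrow> u i j - u (i - 1) j \<ge> - C * w i / psum w i"
proof -
  obtain C N where "C > 0" and bound: "\<And>i j. N \<le> i \<Longrightarrow> N \<le> j \<Longrightarrow> psum w i / w i * Delta10 u i j \<ge> - C"
    using assms(2) unfolding O_L_def by blast
  have "u i j - u (i - 1) j \<ge> - C * w i / psum w i" if "N < i" "N \<le> j" for i j
  proof -
    \<comment> \<open>\<open>N < i\<close> excludes \<open>i = 0\<close>, where \<open>Delta10\<close> is not the difference of neighbours.\<close>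
    have "psum w i / w i * (u i j - u (i - 1) j) \<ge> - C"
      using bound[of i j] that unfolding Delta10_def by simp
    then have "psum w i / w i * (u i j - u (i - 1) j) * (w i / psum w i) \<ge> - C * (w i / psum w i)"
      using w[of i] psum_pos[of w i, OF w] by (intro mult_right_mono) auto
    then show ?thesis
      using w[of i] psum_pos[of w i, OF w] by simp
  qed
  with \<open>C > 0\<close> show ?thesis using that by blast
qed

lemma O_L_Delta01_imp_increment_bound:
  fixes w :: "nat \<Rightarrow> real" and u :: "nat \<Rightarrow> nat \<Rightarrow> real"
  assumes w: "\<And>k. w k > 0" and "O_L (\<lambda>m n. psum w n / w n * Delta01 u m n)"
  obtains C N where "C > 0"
    and "\<And>i j. N < j \<Longrightarrow> N \<le> i \<Longrightarrow> u i j - u i (j - 1) \<ge> - C * w j / psum w j"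
proof -
  have "O_L (\<lambda>n m. psum w n / w n * Delta10 (\<lambda>i j. u j i) n m)"
    using O_L_transpose[OF assms(2)] by (simp only: Delta01_conv_Delta10)
  then obtain C N where "C > 0"
    and bound: "\<And>i j. N < i \<Longrightarrow> N \<le> j \<Longrightarrow> u j i - u j (i - 1) \<ge> - C * w i / psum w i"
    using O_L_Delta10_imp_increment_bound[where w = w and u = "\<lambda>i j. u j i", OF w] by blast
  show thesis
    by (rule that[OF \<open>C > 0\<close>]) (rule bound)
qed

lemma psum_psum_wmean:
  assumes "\<And>k. p k > 0" and "\<And>k. q k > 0"
  shows "psum p m * psum q n * wmean p q u m n = (\<Sum>i\<le>m. \<Sum>j\<le>n. p i * q j * u i j)"
  using psum_pos[of p m] psum_pos[of q n] assms unfolding wmean_def by simp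

lemma rectangle_sum_wmean:
  fixes p q :: "nat \<Rightarrow> real" and u :: "nat \<Rightarrow> nat \<Rightarrow> real"
  assumes p: "\<And>k. p k > 0" and q: "\<And>k. q k > 0" and "a \<le> b" "c \<le> d"
  shows "(\<Sum>i\<in>{a<..b}. \<Sum>j\<in>{c<..d}. p i * q j * u i j)
    = psum p b * psum q d * wmean p q u b d - psum p a * psum q d * wmean p q u a d
      - psum p b * psum q c * wmean p q u b c + psum p a * psum q c * wmean p q u a c"
proof -
  let ?S = "\<lambda>m n. \<Sum>i\<le>m. \<Sum>j\<le>n. p i * q j * u i j"
  have "(\<Sum>i\<in>{a<..b}. \<Sum>j\<in>{c<..d}. p i * q j * u i j)
      = (\<Sum>i\<in>{a<..b}. (\<Sum>j\<le>d. p i * q j * u i j) - (\<Sum>j\<le>c. p i * q j * u i j))"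
    using \<open>c \<le> d\<close> by (simp add: sum_greaterThanAtMost_eq_diff)
  also have "\<dots> = ?S b d - ?S a d - ?S b c + ?S a c"
    using \<open>a \<le> b\<close> by (simp add: sum_subtractf sum_greaterThanAtMost_eq_diff)
  finally show ?thesis
    by (simp only: psum_psum_wmean[OF p q])
qed

lemma rectangle_sum_const:
  fixes p q :: "nat \<Rightarrow> real"
  assumes "a \<le> b" "c \<le> d"
  shows "(\<Sum>i\<in>{a<..b}. \<Sum>j\<in>{c<..d}. p i * q j * Y)
    = Y * (psum p b - psum p a) * (psum q d - psum q c)"
proof -
  have "(\<Sum>i\<in>{a<..b}. \<Sum>j\<in>{c<..d}. p i * q j * Y) = Y * (\<Sum>i\<in>{a<..b}. \<Sum>j\<in>{c<..d}. p i * q j)"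
    by (simp add: sum_distrib_left mult.commute)
  also have "\<dots> = Y * ((\<Sum>i\<in>{a<..b}. p i) * (\<Sum>j\<in>{c<..d}. q j))"
    by (simp only: sum_product)
  also have "\<dots> = Y * ((psum p b - psum p a) * (psum q d - psum q c))"
    using assms by (simp only: sum_greaterThanAtMost_eq_diff psum_def)
  finally show ?thesis
    by (simp only: mult.assoc)
qed

lemma window_ratio_estimate:
  fixes P\<^sub>a P\<^sub>b Q\<^sub>c Q\<^sub>d Z e \<delta> :: real
  assumes "P\<^sub>a > 0" "Q\<^sub>c > 0" "e \<ge> 0" "0 < \<delta>" "\<delta> \<le> 1"
    and "(1 + \<delta>/2) * P\<^sub>a \<le> P\<^sub>b" "P\<^sub>b \<le> (1 + \<delta>) * P\<^sub>a"
    and "(1 + \<delta>/2) * Q\<^sub>c \<le> Q\<^sub>d" "Q\<^sub>d \<le> (1 + \<delta>) * Q\<^sub>c"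
    and Z: "Z * ((P\<^sub>b - P\<^sub>a) * (Q\<^sub>d - Q\<^sub>c)) \<le> e * (P\<^sub>b + P\<^sub>a) * (Q\<^sub>d + Q\<^sub>c)"
  shows "Z \<le> 36 * e / \<delta>^2"
proof (cases "Z \<le> 0")
  case True
  then show ?thesis
    using \<open>e \<ge> 0\<close> by (smt (verit) divide_nonneg_nonneg zero_le_power2)
next
  case False
  have "Z * ((\<delta>/2 * P\<^sub>a) * (\<delta>/2 * Q\<^sub>c)) \<le> Z * ((P\<^sub>b - P\<^sub>a) * (Q\<^sub>d - Q\<^sub>c))"
    using False assms by (intro mult_left_mono mult_mono) (auto simp: algebra_simps)
  also have "\<dots> \<le> e * (P\<^sub>b + P\<^sub>a) * (Q\<^sub>d + Q\<^sub>c)"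
    by (fact Z)
  also have "\<dots> \<le> e * (3 * P\<^sub>a) * (3 * Q\<^sub>c)"
  proof -
    have "P\<^sub>a * \<delta> \<le> P\<^sub>a" "Q\<^sub>c * \<delta> \<le> Q\<^sub>c"
      using assms by (simp_all add: mult_left_le)
    moreover have "0 \<le> P\<^sub>a * \<delta>" "0 \<le> Q\<^sub>c * \<delta>"
      using assms by simp_all
    moreover have "P\<^sub>a + P\<^sub>a * \<delta> / 2 \<le> P\<^sub>b" "P\<^sub>b \<le> P\<^sub>a + P\<^sub>a * \<delta>"
      and "Q\<^sub>c + Q\<^sub>c * \<delta> / 2 \<le> Q\<^sub>d" "Q\<^sub>d \<le> Q\<^sub>c + Q\<^sub>c * \<delta>"
      using assms by (simp_all add: algebra_simps)
    ultimately have "P\<^sub>b + P\<^sub>a \<le> 3 * P\<^sub>a" "Q\<^sub>d + Q\<^sub>c \<le> 3 * Q\<^sub>c" "0 \<le> Q\<^sub>d + Q\<^sub>c"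
      using assms by linarith+
    then show ?thesis
      using assms by (intro mult_mono mult_left_mono) auto
  qed
  finally have "(Z * \<delta>^2 / 4) * (P\<^sub>a * Q\<^sub>c) \<le> (9 * e) * (P\<^sub>a * Q\<^sub>c)"
    by (simp add: algebra_simps power2_eq_square)
  then have "Z * \<delta>^2 / 4 \<le> 9 * e"
    using assms by (simp add: mult_le_cancel_right)
  then show ?thesis
    using \<open>\<delta> > 0\<close> by (simp add: field_simps)
qed

lemma wmean_uminus: "wmean p q (\<lambda>i j. - u i j) m n = - wmean p q u m n"
  by (simp add: wmean_def sum_negf)

lemma window_mean_estimate:
  fixes p q :: "nat \<Rightarrow> real" and u :: "nat \<Rightarrow> nat \<Rightarrow> real"
  assumes p: "\<And>k. p k > 0" and q: "\<And>k. q k > 0" and "0 < \<delta>" "\<delta> \<le> 1"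
    and windows: "ratio_window p \<delta> a b" "ratio_window q \<delta> c d"
    and corners: "\<And>x y. x \<in> {a, b} \<Longrightarrow> y \<in> {c, d} \<Longrightarrow> \<bar>wmean p q u x y - l\<bar> \<le> e"
    and below: "\<And>i j. a < i \<Longrightarrow> i \<le> b \<Longrightarrow> c < j \<Longrightarrow> j \<le> d \<Longrightarrow> Y \<le> u i j"
  shows "Y - l \<le> 36 * e / \<delta>^2"
proof -
  have "a \<le> b" "c \<le> d"
    and ratios: "(1 + \<delta>/2) * psum p a \<le> psum p b" "psum p b \<le> (1 + \<delta>) * psum p a"
      "(1 + \<delta>/2) * psum q c \<le> psum q d" "psum q d \<le> (1 + \<delta>) * psum q c"
    using windows unfolding ratio_window_def by simp_all
  let ?S = "\<Sum>i\<in>{a<..b}. \<Sum>j\<in>{c<..d}. p i * q j * u i j"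
  let ?P = "psum p" and ?Q = "psum q" and ?\<sigma> = "\<lambda>x y. wmean p q u x y - l"
  have pos: "?P a > 0" "?P b > 0" "?Q c > 0" "?Q d > 0"
    using psum_pos[of p, OF p] psum_pos[of q, OF q] by auto
  have weighted: "\<bar>?P x * ?Q y * ?\<sigma> x y\<bar> \<le> ?P x * ?Q y * e" if "x \<in> {a, b}" "y \<in> {c, d}" for x y
    using corners[OF that] psum_pos[of p x, OF p] psum_pos[of q y, OF q]
    by (simp add: abs_mult mult_left_mono)
  have "Y * ((?P b - ?P a) * (?Q d - ?Q c)) = (\<Sum>i\<in>{a<..b}. \<Sum>j\<in>{c<..d}. p i * q j * Y)"
    using rectangle_sum_const[OF \<open>a \<le> b\<close> \<open>c \<le> d\<close>] by (simp add: mult.assoc)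
  also have "\<dots> \<le> ?S"
    using below p q by (intro sum_mono mult_left_mono) (auto simp: less_imp_le)
  finally have "Y * ((?P b - ?P a) * (?Q d - ?Q c)) \<le> ?S" .
  moreover have "?S - l * ((?P b - ?P a) * (?Q d - ?Q c))
      = ?P b * ?Q d * ?\<sigma> b d - ?P a * ?Q d * ?\<sigma> a d - ?P b * ?Q c * ?\<sigma> b c + ?P a * ?Q c * ?\<sigma> a c"
    unfolding rectangle_sum_wmean[OF p q \<open>a \<le> b\<close> \<open>c \<le> d\<close>] by (simp add: algebra_simps)
  moreover have "\<dots> \<le> e * (?P b + ?P a) * (?Q d + ?Q c)"
    using weighted[of b d] weighted[of a d] weighted[of b c] weighted[of a c]
    by (simp add: algebra_simps abs_le_iff)
  ultimately have "(Y - l) * ((?P b - ?P a) * (?Q d - ?Q c)) \<le> e * (?P b + ?P a) * (?Q d + ?Q c)"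
    by (simp add: left_diff_distrib)
  moreover have "e \<ge> 0"
    using corners[of a c] by (meson abs_ge_zero insertI1 order_trans)
  ultimately show ?thesis
    using \<open>0 < \<delta>\<close> \<open>\<delta> \<le> 1\<close> ratios pos by (intro window_ratio_estimate[of "?P a" "?Q c" e \<delta> "?P b" "?Q d"]) auto
qed

lemma exists_tauberian_parameters:
  fixes C \<epsilon> :: real
  assumes "C \<ge> 0" and "\<epsilon> > 0"
  obtains \<delta> e where "0 < \<delta>" "\<delta> \<le> 1" "0 < e" "C * \<delta> + 36 * e / \<delta>^2 < \<epsilon>"
proof -
  define \<delta> where "\<delta> = min 1 (\<epsilon> / (4 * (C + 1)))"
  define e where "e = \<epsilon> * \<delta>^2 / 72"
  have "0 < \<delta>" "\<delta> \<le> 1"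
    using assms by (simp_all add: \<delta>_def)
  have "C * \<delta> \<le> (C + 1) * (\<epsilon> / (4 * (C + 1)))"
    using assms \<open>0 < \<delta>\<close> unfolding \<delta>_def by (intro mult_mono) auto
  also have "\<dots> = \<epsilon> / 4"
    using assms by (simp add: field_simps)
  finally have "C * \<delta> + 36 * e / \<delta>^2 < \<epsilon>"
    using assms \<open>0 < \<delta>\<close> by (simp add: e_def)
  moreover have "0 < e"
    using assms \<open>0 < \<delta>\<close> by (simp add: e_def)
  ultimately show thesis
    using that \<open>0 < \<delta>\<close> \<open>\<delta> \<le> 1\<close> by blast
qed

context
  fixes p q :: "nat \<Rightarrow> real" and u :: "nat \<Rightarrow> nat \<Rightarrow> real" and C\<^sub>p C\<^sub>q :: real and N :: nat
  assumes p_pos: "\<And>k. p k > 0" and q_pos: "\<And>k. q k > 0" and "C\<^sub>p \<ge> 0" "C\<^sub>q \<ge> 0"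
    and row_increment: "\<And>i j. N < i \<Longrightarrow> N \<le> j \<Longrightarrow> u i j - u (i - 1) j \<ge> - C\<^sub>p * p i / psum p i"
    and col_increment: "\<And>i j. N < j \<Longrightarrow> N \<le> i \<Longrightarrow> u i j - u i (j - 1) \<ge> - C\<^sub>q * q j / psum q j"
begin

lemma window_lower_bound:
  assumes "N \<le> a" "a \<le> i" "N \<le> c" "c \<le> j"
    and "psum p i \<le> (1 + \<delta>) * psum p a" "psum q j \<le> (1 + \<delta>) * psum q c"
  shows "u i j \<ge> u a c - (C\<^sub>p + C\<^sub>q) * \<delta>"
proof -
  have "u i j \<ge> u a j - C\<^sub>p * \<delta>"
    using assms \<open>C\<^sub>p \<ge> 0\<close> row_increment
    by (intro telescope_lower_bound[where f = "\<lambda>k. u k j", OF p_pos]) auto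
  moreover have "u a j \<ge> u a c - C\<^sub>q * \<delta>"
    using assms \<open>C\<^sub>q \<ge> 0\<close> col_increment
    by (intro telescope_lower_bound[where f = "\<lambda>k. u a k", OF q_pos]) auto
  ultimately show ?thesis
    by (simp add: algebra_simps)
qed

lemma estimate_from_window_above:
  assumes "0 < \<delta>" "\<delta> \<le> 1" "N \<le> m" "N \<le> n"
    and windows: "ratio_window p \<delta> m b" "ratio_window q \<delta> n d"
    and corners: "\<And>x y. x \<in> {m, b} \<Longrightarrow> y \<in> {n, d} \<Longrightarrow> \<bar>wmean p q u x y - l\<bar> \<le> e"
  shows "u m n - l \<le> (C\<^sub>p + C\<^sub>q) * \<delta> + 36 * e / \<delta>^2"
proof -
  have "u m n - (C\<^sub>p + C\<^sub>q) * \<delta> - l \<le> 36 * e / \<delta>^2"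
  proof (rule window_mean_estimate[where p = p and q = q, OF p_pos q_pos \<open>0 < \<delta>\<close> \<open>\<delta> \<le> 1\<close> windows corners])
    fix i j
    assume "m < i" "i \<le> b" "n < j" "j \<le> d"
    moreover have "psum p i \<le> (1 + \<delta>) * psum p m" "psum q j \<le> (1 + \<delta>) * psum q n"
      using windows psum_mono[of p i b, OF p_pos] psum_mono[of q j d, OF q_pos] \<open>i \<le> b\<close> \<open>j \<le> d\<close>
      unfolding ratio_window_def by linarith+
    ultimately show "u m n - (C\<^sub>p + C\<^sub>q) * \<delta> \<le> u i j"
      using \<open>N \<le> m\<close> \<open>N \<le> n\<close> by (intro window_lower_bound) auto
  qed
  then show ?thesis
    by simp
qed

lemma estimate_from_window_below:
  assumes "0 < \<delta>" "\<delta> \<le> 1" "N \<le> a" "N \<le> c"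
    and windows: "ratio_window p \<delta> a m" "ratio_window q \<delta> c n"
    and corners: "\<And>x y. x \<in> {a, m} \<Longrightarrow> y \<in> {c, n} \<Longrightarrow> \<bar>wmean p q u x y - l\<bar> \<le> e"
  shows "l - u m n \<le> (C\<^sub>p + C\<^sub>q) * \<delta> + 36 * e / \<delta>^2"
proof -
  have "- (u m n + (C\<^sub>p + C\<^sub>q) * \<delta>) - (- l) \<le> 36 * e / \<delta>^2"
  proof (rule window_mean_estimate[where p = p and q = q and u = "\<lambda>i j. - u i j",
        OF p_pos q_pos \<open>0 < \<delta>\<close> \<open>\<delta> \<le> 1\<close> windows])
    fix i j
    assume "a < i" "i \<le> m" "c < j" "j \<le> n"
    moreover have "(1 + \<delta>) * psum p a \<le> (1 + \<delta>) * psum p i" "(1 + \<delta>) * psum q c \<le> (1 + \<delta>) * psum q j"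
      using psum_mono[of p a i, OF p_pos] psum_mono[of q c j, OF q_pos] \<open>a < i\<close> \<open>c < j\<close> \<open>0 < \<delta>\<close>
      by (simp_all add: mult_left_mono)
    then have "psum p m \<le> (1 + \<delta>) * psum p i" "psum q n \<le> (1 + \<delta>) * psum q j"
      using windows unfolding ratio_window_def by linarith+
    ultimately have "u i j - (C\<^sub>p + C\<^sub>q) * \<delta> \<le> u m n"
      using \<open>N \<le> a\<close> \<open>N \<le> c\<close> by (intro window_lower_bound) auto
    then show "- (u m n + (C\<^sub>p + C\<^sub>q) * \<delta>) \<le> - u i j"
      by simp
  next
    fix x y
    assume "x \<in> {a, m}" "y \<in> {c, n}"
    then show "\<bar>wmean p q (\<lambda>i j. - u i j) x y - - l\<bar> \<le> e"
      using corners by (simp add: wmean_uminus abs_minus_commute)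
  qed
  then show ?thesis
    by simp
qed

lemma estimate_between_windows:
  assumes "0 < \<delta>" "\<delta> \<le> 1" "N \<le> N\<^sub>0"
    and means: "\<And>m n. N\<^sub>0 \<le> m \<Longrightarrow> N\<^sub>0 \<le> n \<Longrightarrow> \<bar>wmean p q u m n - l\<bar> \<le> e"
    and above: "ratio_window p \<delta> m b" "ratio_window q \<delta> n d"
    and "N\<^sub>0 \<le> a" "N\<^sub>0 \<le> c" and below: "ratio_window p \<delta> a m" "ratio_window q \<delta> c n"
  shows "\<bar>u m n - l\<bar> \<le> (C\<^sub>p + C\<^sub>q) * \<delta> + 36 * e / \<delta>^2"
proof -
  have "N\<^sub>0 \<le> m" "N\<^sub>0 \<le> n" "m \<le> b" "n \<le> d"
    using \<open>N\<^sub>0 \<le> a\<close> \<open>N\<^sub>0 \<le> c\<close> above below unfolding ratio_window_def by simp_all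
  have "u m n - l \<le> (C\<^sub>p + C\<^sub>q) * \<delta> + 36 * e / \<delta>^2"
    using \<open>N \<le> N\<^sub>0\<close> \<open>N\<^sub>0 \<le> m\<close> \<open>N\<^sub>0 \<le> n\<close> \<open>m \<le> b\<close> \<open>n \<le> d\<close>
    by (intro estimate_from_window_above[OF \<open>0 < \<delta>\<close> \<open>\<delta> \<le> 1\<close> _ _ above] means) auto
  moreover have "l - u m n \<le> (C\<^sub>p + C\<^sub>q) * \<delta> + 36 * e / \<delta>^2"
    using \<open>N \<le> N\<^sub>0\<close> \<open>N\<^sub>0 \<le> a\<close> \<open>N\<^sub>0 \<le> c\<close> \<open>N\<^sub>0 \<le> m\<close> \<open>N\<^sub>0 \<le> n\<close>
    by (intro estimate_from_window_below[OF \<open>0 < \<delta>\<close> \<open>\<delta> \<le> 1\<close> _ _ below] means) auto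
  ultimately show ?thesis
    by (simp add: abs_le_iff)
qed

lemma P_convergent_if_NPQ_summable:
  assumes "filterlim (psum p) at_top sequentially" "filterlim (psum q) at_top sequentially"
    and "((\<lambda>k. psum p (Suc k) / psum p k) \<longlongrightarrow> 1) sequentially"
    and "((\<lambda>k. psum q (Suc k) / psum q k) \<longlongrightarrow> 1) sequentially"
    and "NPQ_summable_to p q u l"
  shows "P_convergent_to u l"
  unfolding P_convergent_to_def
proof (intro allI impI)
  fix \<epsilon> :: real
  assume "\<epsilon> > 0"
  obtain \<delta> e where "0 < \<delta>" "\<delta> \<le> 1" "0 < e" and small: "(C\<^sub>p + C\<^sub>q) * \<delta> + 36 * e / \<delta>^2 < \<epsilon>"
    using exists_tauberian_parameters[of "C\<^sub>p + C\<^sub>q" \<epsilon>] \<open>C\<^sub>p \<ge> 0\<close> \<open>C\<^sub>q \<ge> 0\<close> \<open>\<epsilon> > 0\<close> by auto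
  obtain N\<^sub>0 where "N \<le> N\<^sub>0" and means: "\<And>m n. N\<^sub>0 \<le> m \<Longrightarrow> N\<^sub>0 \<le> n \<Longrightarrow> \<bar>wmean p q u m n - l\<bar> \<le> e"
    using assms(5) \<open>0 < e\<close> unfolding NPQ_summable_to_def P_convergent_to_def
    by (metis less_imp_le max.cobounded1 max.cobounded2 order_trans)
  have "eventually (\<lambda>k. (\<exists>b. ratio_window p \<delta> k b) \<and> (\<exists>a. N\<^sub>0 \<le> a \<and> ratio_window p \<delta> a k)
      \<and> (\<exists>d. ratio_window q \<delta> k d) \<and> (\<exists>c. N\<^sub>0 \<le> c \<and> ratio_window q \<delta> c k)) sequentially"
    using assms(1-4) p_pos q_pos \<open>0 < \<delta>\<close>
    by (intro eventually_conj eventually_psum_window_above eventually_psum_window_below)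
  then obtain K where windows: "\<And>k. K \<le> k \<Longrightarrow> (\<exists>b. ratio_window p \<delta> k b) \<and> (\<exists>a. N\<^sub>0 \<le> a \<and> ratio_window p \<delta> a k)
      \<and> (\<exists>d. ratio_window q \<delta> k d) \<and> (\<exists>c. N\<^sub>0 \<le> c \<and> ratio_window q \<delta> c k)"
    by (auto simp: eventually_sequentially)
  have "\<bar>u m n - l\<bar> < \<epsilon>" if "K \<le> m" "K \<le> n" for m n
  proof -
    obtain a b c d where "ratio_window p \<delta> m b" "ratio_window q \<delta> n d"
      and "N\<^sub>0 \<le> a" "N\<^sub>0 \<le> c" "ratio_window p \<delta> a m" "ratio_window q \<delta> c n"
      using windows[OF \<open>K \<le> m\<close>] windows[OF \<open>K \<le> n\<close>] by blast
    then have "\<bar>u m n - l\<bar> \<le> (C\<^sub>p + C\<^sub>q) * \<delta> + 36 * e / \<delta>^2"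
      using \<open>0 < \<delta>\<close> \<open>\<delta> \<le> 1\<close> \<open>N \<le> N\<^sub>0\<close> means by (intro estimate_between_windows)
    then show ?thesis
      using small by linarith
  qed
  then show "\<exists>n\<^sub>0. \<forall>m n. n\<^sub>0 \<le> m \<and> n\<^sub>0 \<le> n \<longrightarrow> \<bar>u m n - l\<bar> < \<epsilon>"
    by blast
qed

end

theorem theorem4p2:
  fixes p q :: "nat \<Rightarrow> real" and u :: "nat \<Rightarrow> nat \<Rightarrow> real" and l \<alpha> :: real
  assumes "\<alpha> \<ge> 0"
    and "p \<in> SVA_reg \<alpha>" and "q \<in> SVA_reg \<alpha>"
    and "filterlim (psum p) at_top sequentially"
    and "filterlim (psum q) at_top sequentially"
    and "NPQ_summable_to p q u l"
    and "O_L (\<lambda>m n. psum p m / p m * Delta10 u m n)"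
    and "O_L (\<lambda>m n. psum q n / q n * Delta01 u m n)"
  shows "P_convergent_to u l"
proof -
  have p: "\<And>k. p k > 0" and q: "\<And>k. q k > 0"
    using assms(2,3) by (auto simp: SVA_reg_def)
  obtain C\<^sub>p N\<^sub>p where "C\<^sub>p > 0"
    and row: "\<And>i j. N\<^sub>p < i \<Longrightarrow> N\<^sub>p \<le> j \<Longrightarrow> u i j - u (i - 1) j \<ge> - C\<^sub>p * p i / psum p i"
    using O_L_Delta10_imp_increment_bound[where w = p and u = u, OF p assms(7)] by blast
  obtain C\<^sub>q N\<^sub>q where "C\<^sub>q > 0"
    and col: "\<And>i j. N\<^sub>q < j \<Longrightarrow> N\<^sub>q \<le> i \<Longrightarrow> u i j - u i (j - 1) \<ge> - C\<^sub>q * q j / psum q j"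
    using O_L_Delta01_imp_increment_bound[where w = q and u = u, OF q assms(8)] by blast
  show ?thesis
  proof (rule P_convergent_if_NPQ_summable[where N = "max N\<^sub>p N\<^sub>q", OF p q])
    show "u i j - u (i - 1) j \<ge> - C\<^sub>p * p i / psum p i" if "max N\<^sub>p N\<^sub>q < i" "max N\<^sub>p N\<^sub>q \<le> j" for i j
      using that by (intro row) simp_all
    show "u i j - u i (j - 1) \<ge> - C\<^sub>q * q j / psum q j" if "max N\<^sub>p N\<^sub>q < j" "max N\<^sub>p N\<^sub>q \<le> i" for i j
      using that by (intro col) simp_all
  qed (use \<open>C\<^sub>p > 0\<close> \<open>C\<^sub>q > 0\<close> assms(4-6) SVA_reg_psum_Suc_ratio[OF assms(2)]
      SVA_reg_psum_Suc_ratio[OF assms(3)] in auto)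
qed

end
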